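(* Let $R$ be a commutative Noetherian ring, $M$ a finitely generated $R$-module, $X \subseteq \mathrm{Spec}(R)$ a basic set, and $\mathscr{E}$ an $R$-submodule of $\mathrm{Hom}_R(M,R)$. For any subset $S \subseteq M$ and any integer $t \in \mathbb{N}$, the set $Y_t := \{\mathfrak{p} \in X \mid \delta^{\mathscr{E}}_\mathfrak{p}(S,M) \leq t\}$ is closed in $X$ (with the subspace Zariski topology).
   Context: A subset $X \subseteq \mathrm{Spec}(R)$ is basic if, whenever the intersection of a family of primes in $X$ is a prime ideal, that intersection belongs to $X$. $\mathscr{E}_\mathfrak{p}$ is viewed inside $\mathrm{Hom}_{R_\mathfrak{p}}(M_\mathfrak{p},R_\mathfrak{p})$. A free $\mathscr{E}_\mathfrak{p}$-summand of $M_\mathfrak{p}$ is a direct summand $F$ (with complement $G$) of $M_\mathfrak{p}$, $F \cong R_\mathfrak{p}^n$, such that each coordinate of the projection $M_\mathfrak{p} \to F \cong R_\mathfrak{p}^n$ along $G$ lies in $\mathscr{E}_\mathfrak{p}$. With $\langle S\rangle$ the submodule generated by $S$, $\delta^{\mathscr{E}}_\mathfrak{p}(S,M)$ is the largest integer $n \ge 0$ such that there exists a free $\mathscr{E}_\mathfrak{p}$-summand of $M_\mathfrak{p}$ of rank $n$ contained in $\langle S\rangle_\mathfrak{p}$. *)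

theory Defs
  imports Complex_Main
begin

definition is_ideal :: "'a::comm_ring_1 set \<Rightarrow> bool" where
  "is_ideal I \<longleftrightarrow> module.subspace ((*) :: 'a \<Rightarrow> 'a \<Rightarrow> 'a) I"

definition noetherian_ring :: "'a::comm_ring_1 itself \<Rightarrow> bool" where
  "noetherian_ring _ \<longleftrightarrow>
     (\<forall>I :: 'a set. is_ideal I \<longrightarrow> (\<exists>F. finite F \<and> I = module.span (*) F))"

definition prime_ideal :: "'a::comm_ring_1 set \<Rightarrow> bool" where
  "prime_ideal P \<longleftrightarrow> is_ideal P \<and> P \<noteq> UNIV \<and> (\<forall>a b. a * b \<in> P \<longrightarrow> a \<in> P \<or> b \<in> P)"

definition Spec :: "'a::comm_ring_1 set set" where
  "Spec = {P. prime_ideal P}"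

text \<open>Zariski-closed subsets of Spec are the sets V(J) = {p. J \<subseteq> p}; a subset Y of X is
 closed in the subspace topology of X iff Y = X \<inter> V(J) for some J.\<close>
definition zariski_closed_in :: "'a::comm_ring_1 set set \<Rightarrow> 'a set set \<Rightarrow> bool" where
  "zariski_closed_in X Y \<longleftrightarrow> (\<exists>J :: 'a set. Y = {p \<in> X. J \<subseteq> p})"

definition basic_set :: "'a::comm_ring_1 set set \<Rightarrow> bool" where
  "basic_set X \<longleftrightarrow> X \<subseteq> Spec \<and>
     (\<forall>F. F \<subseteq> X \<longrightarrow> prime_ideal (\<Inter>F) \<longrightarrow> \<Inter>F \<in> X)"

definition finitely_generated :: "('a::comm_ring_1 \<Rightarrow> 'm::ab_group_add \<Rightarrow> 'm) \<Rightarrow> bool" where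
  "finitely_generated scale \<longleftrightarrow> (\<exists>F. finite F \<and> module.span scale F = UNIV)"

definition dual_submodule ::
  "('a::comm_ring_1 \<Rightarrow> 'm::ab_group_add \<Rightarrow> 'm) \<Rightarrow> ('m \<Rightarrow> 'a) set \<Rightarrow> bool" where
  "dual_submodule scale E \<longleftrightarrow>
     E \<subseteq> {f. module_hom scale (*) f} \<and> (\<lambda>_. 0) \<in> E \<and>
     (\<forall>f\<in>E. \<forall>g\<in>E. (\<lambda>m. f m + g m) \<in> E) \<and>
     (\<forall>r. \<forall>f\<in>E. (\<lambda>m. r * f m) \<in> E)"

definition loc_rel :: "('a::comm_ring_1 \<Rightarrow> 'm::ab_group_add \<Rightarrow> 'm) \<Rightarrow> 'a set \<Rightarrow> (('m \<times> 'a) \<times> ('m \<times> 'a)) set" where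
  "loc_rel scale p = {((m, s), (m', s')). s \<notin> p \<and> s' \<notin> p \<and>
      (\<exists>u. u \<notin> p \<and> scale u (scale s' m - scale s m') = 0)}"

definition frac :: "('a::comm_ring_1 \<Rightarrow> 'm::ab_group_add \<Rightarrow> 'm) \<Rightarrow> 'a set \<Rightarrow> 'm \<Rightarrow> 'a \<Rightarrow> ('m \<times> 'a) set" where
  "frac scale p m s = loc_rel scale p `` {(m, s)}"

text \<open>The carrier of M_p (for scale = (*) this is R_p).\<close>
definition loc :: "('a::comm_ring_1 \<Rightarrow> 'm::ab_group_add \<Rightarrow> 'm) \<Rightarrow> 'a set \<Rightarrow> ('m \<times> 'a) set set" where
  "loc scale p = {frac scale p m s | m s. s \<notin> p}"

definition loc_rep :: "('a::comm_ring_1 \<Rightarrow> 'm::ab_group_add \<Rightarrow> 'm) \<Rightarrow> 'a set \<Rightarrow> ('m \<times> 'a) set \<Rightarrow> 'm \<times> 'a" where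
  "loc_rep scale p x = (SOME (m, s). s \<notin> p \<and> x = frac scale p m s)"

definition loc_zero :: "('a::comm_ring_1 \<Rightarrow> 'm::ab_group_add \<Rightarrow> 'm) \<Rightarrow> 'a set \<Rightarrow> ('m \<times> 'a) set" where
  "loc_zero scale p = frac scale p 0 1"

definition loc_add :: "('a::comm_ring_1 \<Rightarrow> 'm::ab_group_add \<Rightarrow> 'm) \<Rightarrow> 'a set \<Rightarrow>
    ('m \<times> 'a) set \<Rightarrow> ('m \<times> 'a) set \<Rightarrow> ('m \<times> 'a) set" where
  "loc_add scale p x y =
     (case loc_rep scale p x of (m, s) \<Rightarrow> case loc_rep scale p y of (n, t) \<Rightarrow>
        frac scale p (scale t m + scale s n) (s * t))"

definition loc_smul :: "('a::comm_ring_1 \<Rightarrow> 'm::ab_group_add \<Rightarrow> 'm) \<Rightarrow> 'a set \<Rightarrow>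
    ('a \<times> 'a) set \<Rightarrow> ('m \<times> 'a) set \<Rightarrow> ('m \<times> 'a) set" where
  "loc_smul scale p a x =
     (case loc_rep (*) p a of (r, u) \<Rightarrow> case loc_rep scale p x of (m, s) \<Rightarrow>
        frac scale p (scale r m) (u * s))"

definition loc_submodule :: "('a::comm_ring_1 \<Rightarrow> 'm::ab_group_add \<Rightarrow> 'm) \<Rightarrow> 'a set \<Rightarrow>
    ('m \<times> 'a) set set \<Rightarrow> bool" where
  "loc_submodule scale p N \<longleftrightarrow> N \<subseteq> loc scale p \<and> loc_zero scale p \<in> N \<and>
     (\<forall>x\<in>N. \<forall>y\<in>N. loc_add scale p x y \<in> N) \<and>
     (\<forall>a\<in>loc (*) p. \<forall>x\<in>N. loc_smul scale p a x \<in> N)"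

primrec loc_lincomb :: "('a::comm_ring_1 \<Rightarrow> 'm::ab_group_add \<Rightarrow> 'm) \<Rightarrow> 'a set \<Rightarrow>
    (nat \<Rightarrow> ('a \<times> 'a) set) \<Rightarrow> (nat \<Rightarrow> ('m \<times> 'a) set) \<Rightarrow> nat \<Rightarrow> ('m \<times> 'a) set" where
  "loc_lincomb scale p a b 0 = loc_zero scale p"
| "loc_lincomb scale p a b (Suc n) =
     loc_add scale p (loc_lincomb scale p a b n) (loc_smul scale p (a n) (b n))"

text \<open>E_p viewed inside Hom_{R_p}(M_p, R_p): the maps m/u \<mapsto> f(m)/(s u) with f \<in> E, s \<notin> p.
 Only the values on the carrier of M_p matter.\<close>
definition loc_dual :: "('a::comm_ring_1 \<Rightarrow> 'm::ab_group_add \<Rightarrow> 'm) \<Rightarrow> 'a set \<Rightarrow> ('m \<Rightarrow> 'a) set \<Rightarrow>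
    (('m \<times> 'a) set \<Rightarrow> ('a \<times> 'a) set) set" where
  "loc_dual scale p E = {\<phi>. \<exists>f\<in>E. \<exists>s. s \<notin> p \<and>
      (\<forall>m u. u \<notin> p \<longrightarrow> \<phi> (frac scale p m u) = frac (*) p (f m) (s * u))}"

definition loc_span :: "('a::comm_ring_1 \<Rightarrow> 'm::ab_group_add \<Rightarrow> 'm) \<Rightarrow> 'a set \<Rightarrow> 'm set \<Rightarrow> ('m \<times> 'a) set set" where
  "loc_span scale p S = {frac scale p m u | m u. m \<in> module.span scale S \<and> u \<notin> p}"

text \<open>F is a free E_p-summand of M_p of rank n: F \<oplus> G = M_p, F \<cong> R_p^n via the basis b
 (a \<mapsto> \<Sum> a_i b_i is a bijection R_p^n \<rightarrow> F), and the i-th coordinate of the projection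
 M_p \<rightarrow> F \<cong> R_p^n along G is a map \<phi> i lying in E_p.\<close>
definition free_E_summand :: "('a::comm_ring_1 \<Rightarrow> 'm::ab_group_add \<Rightarrow> 'm) \<Rightarrow> 'a set \<Rightarrow> ('m \<Rightarrow> 'a) set \<Rightarrow>
    nat \<Rightarrow> ('m \<times> 'a) set set \<Rightarrow> bool" where
  "free_E_summand scale p E n F \<longleftrightarrow>
    (\<exists>G b \<phi>.
       loc_submodule scale p F \<and> loc_submodule scale p G \<and>
       F \<inter> G = {loc_zero scale p} \<and>
       (\<forall>x\<in>loc scale p. \<exists>y\<in>F. \<exists>z\<in>G. x = loc_add scale p y z) \<and>
       (\<forall>i<n. b i \<in> F) \<and>
       (\<forall>y\<in>F. \<exists>a. (\<forall>i<n. a i \<in> loc (*) p) \<and> y = loc_lincomb scale p a b n) \<and>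
       (\<forall>a a'. (\<forall>i<n. a i \<in> loc (*) p \<and> a' i \<in> loc (*) p) \<longrightarrow>
           loc_lincomb scale p a b n = loc_lincomb scale p a' b n \<longrightarrow> (\<forall>i<n. a i = a' i)) \<and>
       (\<forall>i<n. \<phi> i \<in> loc_dual scale p E) \<and>
       (\<forall>x\<in>loc scale p. \<forall>y\<in>F. \<forall>z\<in>G. x = loc_add scale p y z \<longrightarrow>
           y = loc_lincomb scale p (\<lambda>i. \<phi> i x) b n))"

definition delta :: "('a::comm_ring_1 \<Rightarrow> 'm::ab_group_add \<Rightarrow> 'm) \<Rightarrow> ('m \<Rightarrow> 'a) set \<Rightarrow> 'a set \<Rightarrow>
    'm set \<Rightarrow> nat" where
  "delta scale E p S = (GREATEST n. \<exists>F. free_E_summand scale p E n F \<and> F \<subseteq> loc_span scale p S)"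

end

theory Submission
  imports Defs "Jordan_Normal_Form.Determinant"
begin

text \<open>For a prime \<open>p\<close>, \<open>\<langle>S\<rangle>\<^sub>p\<close> contains a free \<open>E\<^sub>p\<close>-summand of rank \<open>n\<close> iff some minor
  \<open>det (f\<^sub>i(m\<^sub>j))\<close> with \<open>f\<^sub>i \<in> E\<close>, \<open>m\<^sub>j \<in> \<langle>S\<rangle>\<close> of size \<open>n\<close> lies outside \<open>p\<close>.
  Given such a summand, its basis and coordinate functionals, after clearing denominators, form a
  pairing matrix that is diagonal with entries outside \<open>p\<close> up to a common factor outside \<open>p\<close>;
  so all its leading minors avoid \<open>p\<close>. Conversely, if \<open>d = det (f\<^sub>i(m\<^sub>j)) \<notin> p\<close>, the adjugate
  gives \<open>g\<^sub>i \<in> E\<close> with \<open>g\<^sub>i(m\<^sub>j) = \<delta>\<^sub>i\<^sub>j d\<close>; as \<open>d\<close> is a unit in \<open>R\<^sub>p\<close>, the \<open>m\<^sub>j\<close> span a free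
  summand with complement \<open>\<Inter> ker g\<^sub>i\<close> and coordinates \<open>g\<^sub>i / d\<close>. Hence \<open>\<delta>\<^sub>p \<le> t\<close> iff \<open>p\<close>
  contains every \<open>(t+1)\<close>-minor, and the set in question is \<open>X \<inter> V(J)\<close> for the set \<open>J\<close> of these
  minors. Finite generation of \<open>M\<close> is used only to bound the ranks, so that \<open>\<delta>\<^sub>p\<close> is attained.\<close>

hide_const (open) Module.module

lemma module_times: "module ((*) :: 'a::comm_ring_1 \<Rightarrow> 'a \<Rightarrow> 'a)"
  by standard (simp_all add: algebra_simps)

lemma prime_ideal_mult_left:
  assumes "prime_ideal p" "a \<in> p" shows "b * a \<in> p"
  using assms module.subspace_scale[OF module_times] unfolding prime_ideal_def is_ideal_def by blast

lemma prime_ideal_zero: "prime_ideal p \<Longrightarrow> 0 \<in> p"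
  using module.subspace_0[OF module_times] unfolding prime_ideal_def is_ideal_def by blast

lemma prime_ideal_one_notin: assumes "prime_ideal p" shows "1 \<notin> p"
proof
  assume "1 \<in> p"
  then have "x \<in> p" for x using prime_ideal_mult_left[OF assms, of 1 x] by simp
  then show False using assms unfolding prime_ideal_def by auto
qed

lemma prime_ideal_mult_notin: "prime_ideal p \<Longrightarrow> s \<notin> p \<Longrightarrow> t \<notin> p \<Longrightarrow> s * t \<notin> p"
  unfolding prime_ideal_def by blast

lemma prime_ideal_prod_notin:
  assumes "prime_ideal p" "finite I" "\<And>x. x \<in> I \<Longrightarrow> g x \<notin> p" shows "prod g I \<notin> p"
  using assms(2,3)
  by (induction I rule: finite_induct)
    (auto simp: prime_ideal_one_notin[OF assms(1)] prime_ideal_mult_notin[OF assms(1)])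

lemma prime_ideal_common_multiplier:
  assumes "prime_ideal p" "finite I" "\<And>i. i \<in> I \<Longrightarrow> \<exists>w. w \<notin> p \<and> w * a i = w * b i"
  obtains W where "W \<notin> p" "\<And>i. i \<in> I \<Longrightarrow> W * a i = W * b i"
proof -
  obtain w where w: "\<And>i. i \<in> I \<Longrightarrow> w i \<notin> p \<and> w i * a i = w i * b i"
    using assms(3) by metis
  have "prod w I * a i = prod w I * b i" if i: "i \<in> I" for i
  proof -
    have "prod w I = prod w (I - {i}) * w i"
      using prod.remove[OF assms(2) i, of w] by (simp add: mult.commute)
    then show ?thesis using w[OF i] by (simp add: mult.assoc)
  qed
  moreover have "prod w I \<notin> p" by (rule prime_ideal_prod_notin[OF assms(1,2)]) (use w in blast)
  ultimately show ?thesis using that by blast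
qed

section \<open>Localization at a prime\<close>

abbreviation loc_one :: "'a::comm_ring_1 set \<Rightarrow> ('a \<times> 'a) set" where
  "loc_one p \<equiv> frac (*) p 1 1"

locale prime_localization = Modules.module scale
  for scale :: "'a::comm_ring_1 \<Rightarrow> 'm::ab_group_add \<Rightarrow> 'm" (infixr \<open>*s\<close> 75) +
  fixes p :: "'a set"
  assumes prime_p: "prime_ideal p"
begin

lemmas one_notin = prime_ideal_one_notin[OF prime_p]
   and mult_notin = prime_ideal_mult_notin[OF prime_p]
   and prod_notin = prime_ideal_prod_notin[OF prime_p]

sublocale ring: prime_localization "(*)" p
  by (rule prime_localization.intro[OF module_times prime_localization_axioms.intro[OF prime_p]])

text \<open>In the ring instance \<open>scale_scale\<close> reads \<open>a * (b * c) = a * b * c\<close>, which loops with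
  \<open>mult_ac\<close>.\<close>
declare ring.scale_scale [simp del]

lemma equiv_loc_rel: "equiv {(m, s). s \<notin> p} (loc_rel scale p)"
proof (rule equivI)
  show "loc_rel scale p \<subseteq> {(m, s). s \<notin> p} \<times> {(m, s). s \<notin> p}"
    unfolding loc_rel_def by auto
  show "refl_on {(m, s). s \<notin> p} (loc_rel scale p)"
    unfolding refl_on_def loc_rel_def using one_notin by (auto intro!: exI[of _ 1])
  show "sym (loc_rel scale p)"
  proof (rule symI, clarify)
    fix m s m' s' assume "((m, s), (m', s')) \<in> loc_rel scale p"
    then obtain u where "s \<notin> p" "s' \<notin> p" "u \<notin> p" "u *s (s' *s m - s *s m') = 0"
      unfolding loc_rel_def by auto
    moreover have "u *s (s *s m' - s' *s m) = - (u *s (s' *s m - s *s m'))"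
      by (simp add: algebra_simps)
    ultimately show "((m', s'), (m, s)) \<in> loc_rel scale p"
      unfolding loc_rel_def by auto
  qed
  show "trans (loc_rel scale p)"
  proof (rule transI, clarify)
    fix m s m' s' m'' s''
    assume "((m, s), (m', s')) \<in> loc_rel scale p" "((m', s'), (m'', s'')) \<in> loc_rel scale p"
    then obtain u v where s: "s \<notin> p" "s' \<notin> p" "s'' \<notin> p" and uv: "u \<notin> p" "v \<notin> p"
      and u: "u *s (s' *s m - s *s m') = 0" and v: "v *s (s'' *s m' - s' *s m'') = 0"
      unfolding loc_rel_def by auto
    \<comment> \<open>cross-multiplying by the middle denominator \<open>s'\<close> eliminates \<open>m'\<close>\<close>
    have "(u * v * s') *s (s'' *s m - s *s m'')
        = (v * s'') *s (u *s (s' *s m - s *s m')) + (u * s) *s (v *s (s'' *s m' - s' *s m''))"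
      by (simp add: algebra_simps)
    also have "\<dots> = 0" by (simp only: u v scale_zero_right add_0)
    finally have "(u * v * s') *s (s'' *s m - s *s m'') = 0" .
    moreover have "u * v * s' \<notin> p" using uv s by (simp add: mult_notin)
    ultimately show "((m, s), (m'', s'')) \<in> loc_rel scale p"
      unfolding loc_rel_def using s by blast
  qed
qed

lemma frac_eq_iff:
  "s \<notin> p \<Longrightarrow> s' \<notin> p \<Longrightarrow>
    frac scale p m s = frac scale p m' s' \<longleftrightarrow> (\<exists>u. u \<notin> p \<and> u *s (s' *s m - s *s m') = 0)"
  unfolding frac_def by (subst eq_equiv_class_iff[OF equiv_loc_rel]) (auto simp: loc_rel_def)

lemma frac_eqI: "s \<notin> p \<Longrightarrow> s' \<notin> p \<Longrightarrow> s' *s m = s *s m' \<Longrightarrow> frac scale p m s = frac scale p m' s'"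
  using frac_eq_iff one_notin by (auto intro!: exI[of _ 1])

lemma frac_in_loc: "s \<notin> p \<Longrightarrow> frac scale p m s \<in> loc scale p"
  unfolding loc_def by blast

lemma locE:
  assumes "x \<in> loc scale p" obtains m s where "s \<notin> p" "x = frac scale p m s"
  using assms unfolding loc_def by blast

lemma loc_rep_frac:
  assumes "s \<notin> p" "loc_rep scale p (frac scale p m s) = (m0, s0)"
  shows "s0 \<notin> p" "frac scale p m0 s0 = frac scale p m s"
proof -
  have "\<exists>q. case q of (a, b) \<Rightarrow> b \<notin> p \<and> frac scale p m s = frac scale p a b"
    using assms(1) by auto
  from someI_ex[OF this] assms(2) show "s0 \<notin> p" "frac scale p m0 s0 = frac scale p m s"
    unfolding loc_rep_def by auto
qed

lemma frac_zero: "s \<notin> p \<Longrightarrow> frac scale p 0 s = loc_zero scale p"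
  unfolding loc_zero_def by (rule frac_eqI) (simp_all add: one_notin)

lemma frac_cancel: "s \<notin> p \<Longrightarrow> u \<notin> p \<Longrightarrow> frac scale p (u *s m) (u * s) = frac scale p m s"
  by (rule frac_eqI) (simp_all add: mult_notin mult_ac)

lemma loc_add_frac:
  assumes "s \<notin> p" "t \<notin> p"
  shows "loc_add scale p (frac scale p m s) (frac scale p n t) = frac scale p (t *s m + s *s n) (s * t)"
proof -
  obtain m0 s0 where m0: "loc_rep scale p (frac scale p m s) = (m0, s0)" by fastforce
  obtain n0 t0 where n0: "loc_rep scale p (frac scale p n t) = (n0, t0)" by fastforce
  note m0' = loc_rep_frac[OF assms(1) m0] and n0' = loc_rep_frac[OF assms(2) n0]
  obtain u where u: "u \<notin> p" "u *s (s *s m0 - s0 *s m) = 0"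
    using m0' frac_eq_iff assms by metis
  obtain v where v: "v \<notin> p" "v *s (t *s n0 - t0 *s n) = 0"
    using n0' frac_eq_iff assms by metis
  have "(u * v) *s ((s * t) *s (t0 *s m0 + s0 *s n0) - (s0 * t0) *s (t *s m + s *s n))
      = (v * t * t0) *s (u *s (s *s m0 - s0 *s m)) + (u * s * s0) *s (v *s (t *s n0 - t0 *s n))"
    by (simp add: algebra_simps)
  also have "\<dots> = 0" by (simp add: u v)
  finally have "frac scale p (t0 *s m0 + s0 *s n0) (s0 * t0) = frac scale p (t *s m + s *s n) (s * t)"
    using frac_eq_iff m0'(1) n0'(1) assms u(1) v(1) mult_notin by meson
  then show ?thesis unfolding loc_add_def m0 n0 by simp
qed

end

text \<open>Reentering the locale makes the ring instances of the facts above available.\<close>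
context prime_localization
begin

lemma loc_smul_frac:
  assumes "w \<notin> p" "s \<notin> p"
  shows "loc_smul scale p (frac (*) p r w) (frac scale p m s) = frac scale p (r *s m) (w * s)"
proof -
  obtain r0 w0 where r0: "loc_rep (*) p (frac (*) p r w) = (r0, w0)" by fastforce
  obtain m0 s0 where m0: "loc_rep scale p (frac scale p m s) = (m0, s0)" by fastforce
  note r0' = ring.loc_rep_frac[OF assms(1) r0] and m0' = loc_rep_frac[OF assms(2) m0]
  obtain u where u: "u \<notin> p" "u * (w * r0 - w0 * r) = 0"
    using r0' ring.frac_eq_iff assms by metis
  obtain v where v: "v \<notin> p" "v *s (s *s m0 - s0 *s m) = 0"
    using m0' frac_eq_iff assms by metis
  have "(u * v) *s ((w * s) *s (r0 *s m0) - (w0 * s0) *s (r *s m))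
      = (v * s * (u * (w * r0 - w0 * r))) *s m0 + (u * w0 * r) *s (v *s (s *s m0 - s0 *s m))"
    by (simp add: algebra_simps)
  also have "\<dots> = 0" by (simp add: u v)
  finally have "frac scale p (r0 *s m0) (w0 * s0) = frac scale p (r *s m) (w * s)"
    using frac_eq_iff m0'(1) r0'(1) assms u(1) v(1) mult_notin by meson
  then show ?thesis unfolding loc_smul_def r0 m0 by simp
qed

lemma loc_zero_in_loc: "loc_zero scale p \<in> loc scale p"
  unfolding loc_zero_def by (rule frac_in_loc[OF one_notin])

lemma loc_add_in_loc: "x \<in> loc scale p \<Longrightarrow> y \<in> loc scale p \<Longrightarrow> loc_add scale p x y \<in> loc scale p"
  by (elim locE) (simp add: loc_add_frac frac_in_loc mult_notin)

lemma loc_smul_in_loc: "a \<in> loc (*) p \<Longrightarrow> x \<in> loc scale p \<Longrightarrow> loc_smul scale p a x \<in> loc scale p"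
  by (elim locE ring.locE) (simp add: loc_smul_frac frac_in_loc mult_notin)

lemma loc_add_zero_right: "x \<in> loc scale p \<Longrightarrow> loc_add scale p x (loc_zero scale p) = x"
  by (elim locE) (simp add: loc_zero_def loc_add_frac one_notin)

lemma loc_add_zero_left: "x \<in> loc scale p \<Longrightarrow> loc_add scale p (loc_zero scale p) x = x"
  by (elim locE) (simp add: loc_zero_def loc_add_frac one_notin)

lemma loc_smul_one: "x \<in> loc scale p \<Longrightarrow> loc_smul scale p (loc_one p) x = x"
  by (elim locE) (simp add: loc_smul_frac one_notin)

lemma loc_smul_zero: "x \<in> loc scale p \<Longrightarrow> loc_smul scale p (loc_zero (*) p) x = loc_zero scale p"
  by (elim locE) (simp add: loc_zero_def[of "(*)"] loc_smul_frac one_notin frac_zero)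

lemma loc_smul_zero_right:
  assumes "a \<in> loc (*) p" shows "loc_smul scale p a (loc_zero scale p) = loc_zero scale p"
proof -
  obtain c w where w: "w \<notin> p" "a = frac (*) p c w" using assms by (rule ring.locE)
  have "loc_smul scale p a (loc_zero scale p) = frac scale p 0 (w * 1)"
    unfolding loc_zero_def w(2) using w one_notin by (simp add: loc_smul_frac)
  also have "\<dots> = loc_zero scale p" using w by (simp add: frac_zero)
  finally show ?thesis .
qed

lemma loc_lincomb_cong:
  "(\<And>i. i < n \<Longrightarrow> a i = a' i) \<Longrightarrow> loc_lincomb scale p a b n = loc_lincomb scale p a' b n"
  by (induction n) auto

lemma loc_lincomb_unit_vector:
  assumes "\<And>i. i < n \<Longrightarrow> b i \<in> loc scale p" "j < n"
  shows "loc_lincomb scale p (\<lambda>i. if i = j then loc_one p else loc_zero (*) p) b n = b j"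
proof -
  have "loc_lincomb scale p (\<lambda>i. if i = j then loc_one p else loc_zero (*) p) b k
      = (if j < k then b j else loc_zero scale p)" if "k \<le> n" for k
    using that
  proof (induction k)
    case (Suc k)
    then show ?case
      using assms(1)[of k] assms(1)[of j] loc_zero_in_loc
      by (auto simp: loc_smul_zero loc_smul_one loc_add_zero_right loc_add_zero_left less_Suc_eq)
  qed simp
  then show ?thesis using assms(2) by simp
qed

lemma loc_lincomb_common_denominator:
  assumes "u \<notin> p"
  shows "loc_lincomb scale p (\<lambda>j. frac (*) p (r j) u) (\<lambda>j. frac scale p (v j) 1) n
    = frac scale p (\<Sum>j<n. r j *s v j) u"
proof (induction n)
  case 0
  then show ?case by (simp add: frac_zero assms)
next
  case (Suc n)
  have "loc_lincomb scale p (\<lambda>j. frac (*) p (r j) u) (\<lambda>j. frac scale p (v j) 1) (Suc n)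
     = frac scale p (u *s ((\<Sum>j<n. r j *s v j) + r n *s v n)) (u * u)"
    using Suc assms one_notin mult_notin by (simp add: loc_smul_frac loc_add_frac scale_right_distrib)
  also have "\<dots> = frac scale p (\<Sum>j<Suc n. r j *s v j) u"
    by (simp add: frac_cancel assms)
  finally show ?case .
qed

lemma loc_common_denominator:
  fixes n :: nat
  assumes "\<And>i. i < n \<Longrightarrow> a i \<in> loc (*) p"
  shows "\<exists>u r. u \<notin> p \<and> (\<forall>i<n. a i = frac (*) p (r i) u)"
proof -
  have "\<exists>r s. s \<notin> p \<and> a i = frac (*) p r s" if "i < n" for i
    using assms[OF that] by (rule ring.locE) blast
  then obtain r s where rs: "\<And>i. i < n \<Longrightarrow> s i \<notin> p \<and> a i = frac (*) p (r i) (s i)"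
    by metis
  define u where "u = (\<Prod>k<n. s k)"
  \<comment> \<open>bring every fraction to the product of all denominators\<close>
  have "a i = frac (*) p (r i * (\<Prod>k\<in>{..<n} - {i}. s k)) u" if i: "i < n" for i
  proof -
    let ?t = "\<Prod>k\<in>{..<n} - {i}. s k"
    have t: "?t \<notin> p" by (rule prod_notin) (use rs in auto)
    have "u = ?t * s i" unfolding u_def using prod.remove[of "{..<n}" i s] i by (simp add: mult.commute)
    then have "frac (*) p (r i * ?t) u = frac (*) p (?t * r i) (?t * s i)" by (simp add: mult.commute)
    also have "\<dots> = frac (*) p (r i) (s i)" using rs[OF i] t by (intro ring.frac_cancel) auto
    finally show ?thesis using rs[OF i] by simp
  qed
  moreover have "u \<notin> p" unfolding u_def by (rule prod_notin) (use rs in auto)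
  ultimately show ?thesis
    by (intro exI[of _ u] exI[of _ "\<lambda>i. r i * (\<Prod>k\<in>{..<n} - {i}. s k)"]) blast
qed

end

section \<open>Pairing matrices\<close>

definition pairing_mat :: "nat \<Rightarrow> (nat \<Rightarrow> 'm \<Rightarrow> 'a) \<Rightarrow> (nat \<Rightarrow> 'm) \<Rightarrow> 'a mat" where
  "pairing_mat n f v = mat n n (\<lambda>(i, j). f i (v j))"

lemma det_notin_prime_ideal_if_scaled_diagonal:
  fixes A :: "'a::comm_ring_1 mat"
  assumes p: "prime_ideal p" and A: "A \<in> carrier_mat n n" and W: "W \<notin> p"
    and c: "\<And>i. i < n \<Longrightarrow> c i \<notin> p"
    and diag: "\<And>i j. i < n \<Longrightarrow> j < n \<Longrightarrow> W * A $$ (i, j) = (if i = j then W * c i else 0)"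
  shows "det A \<notin> p"
proof
  assume "det A \<in> p"
  then have "det (W \<cdot>\<^sub>m A) \<in> p" using A prime_ideal_mult_left[OF p] by simp
  moreover have "W \<cdot>\<^sub>m A = mat n n (\<lambda>(i, j). if i = j then W * c i else 0)"
    using A diag by (intro eq_matI) auto
  moreover have "det (mat n n (\<lambda>(i, j). if i = j then W * c i else 0)) = (\<Prod>i = 0..<n. W * c i)"
    by (subst det_upper_triangular[of _ n]) (auto simp: upper_triangular_def prod_list_diag_prod)
  moreover have "(\<Prod>i = 0..<n. W * c i) \<notin> p"
    using p W c by (intro prime_ideal_prod_notin prime_ideal_mult_notin) auto
  ultimately show False by simp
qed

text \<open>If \<open>M\<close> is generated by fewer than \<open>n\<close> elements, every \<open>n \<times> n\<close> pairing matrix factors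
  through a matrix with a zero row.\<close>
lemma det_pairing_mat_eq_0:
  assumes md: "module scale" and G: "finite G" "module.span scale G = UNIV"
    and hom: "\<And>i. i < n \<Longrightarrow> module_hom scale (*) (f i)" and less: "card G < n"
  shows "det (pairing_mat n f v) = 0"
proof -
  let ?k = "card G"
  obtain g where g: "bij_betw g {0..<?k} G" using ex_bij_betw_nat_finite[OF G(1)] by blast
  have "\<exists>c. v j = (\<Sum>x\<in>G. scale (c x) x)" for j
    using module.span_finite[OF md G(1)] G(2) by blast
  then obtain c where c: "\<And>j. v j = (\<Sum>x\<in>G. scale (c j x) x)" by metis
  have coord: "f i (v j) = (\<Sum>l = 0..<?k. f i (g l) * c j (g l))" if "i < n" for i j
  proof -
    interpret h: module_hom scale "(*)" "f i" using hom that by auto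
    have "v j = (\<Sum>l = 0..<?k. scale (c j (g l)) (g l))"
      unfolding c by (rule sum.reindex_bij_betw[OF g, symmetric])
    then show ?thesis by (simp add: h.sum h.scale mult.commute)
  qed
  let ?B = "mat n n (\<lambda>(i, l). if l < ?k then f i (g l) else 0)"
  let ?C = "mat n n (\<lambda>(l, j). if l < ?k then c j (g l) else 0)"
  have "pairing_mat n f v = ?B * ?C"
  proof (rule eq_matI)
    fix i j assume "i < dim_row (?B * ?C)" "j < dim_col (?B * ?C)"
    then have ij: "i < n" "j < n" by simp_all
    have "(?B * ?C) $$ (i, j) = (\<Sum>l = 0..<n. if l < ?k then f i (g l) * c j (g l) else 0)"
      using ij by (auto simp: scalar_prod_def intro!: sum.cong)
    also have "\<dots> = f i (v j)"
    proof -
      have "{..<n} \<inter> {l. l < ?k} = {..<?k}" using less by auto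
      then show ?thesis by (simp add: sum.If_cases coord[OF ij(1)] atLeast0LessThan)
    qed
    finally show "pairing_mat n f v $$ (i, j) = (?B * ?C) $$ (i, j)"
      using ij by (simp add: pairing_mat_def)
  qed (simp_all add: pairing_mat_def)
  moreover have "det ?C = 0"
  proof -
    have "?C = mat\<^sub>r n n (\<lambda>l. if l = ?k then 0\<^sub>v n else row ?C l)"
      by (rule eq_matI) auto
    also have "det \<dots> = 0" by (rule det_row_0[OF less]) auto
    finally show ?thesis .
  qed
  ultimately show ?thesis by (simp add: det_mult[of _ n])
qed

lemma dual_submodule_hom: "dual_submodule scale E \<Longrightarrow> f \<in> E \<Longrightarrow> module_hom scale (*) f"
  unfolding dual_submodule_def by blast

lemma dual_submodule_sum:
  fixes n :: nat
  assumes E: "dual_submodule scale E" and f: "\<And>k. k < n \<Longrightarrow> f k \<in> E"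
  shows "(\<lambda>x. \<Sum>k<n. c k * f k x) \<in> E"
  using f
proof (induction n)
  case 0
  then show ?case using E by (simp add: dual_submodule_def)
next
  case (Suc n)
  then show ?case using E unfolding dual_submodule_def by simp
qed

section \<open>A free summand yields a minor outside the prime\<close>

context prime_localization
begin

lemma free_E_summand_dual_basis:
  assumes "free_E_summand scale p E n F"
  obtains b \<phi> where "\<And>j. j < n \<Longrightarrow> b j \<in> F" "\<And>i. i < n \<Longrightarrow> \<phi> i \<in> loc_dual scale p E"
    "\<And>i j. i < n \<Longrightarrow> j < n \<Longrightarrow> \<phi> i (b j) = (if i = j then loc_one p else loc_zero (*) p)"
proof -
  obtain G b \<phi> where
    F: "loc_submodule scale p F" and G: "loc_submodule scale p G" and bF: "\<forall>i<n. b i \<in> F" and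
    uniq: "\<forall>a a'. (\<forall>i<n. a i \<in> loc (*) p \<and> a' i \<in> loc (*) p) \<longrightarrow>
      loc_lincomb scale p a b n = loc_lincomb scale p a' b n \<longrightarrow> (\<forall>i<n. a i = a' i)" and
    \<phi>E: "\<forall>i<n. \<phi> i \<in> loc_dual scale p E" and
    proj: "\<forall>x\<in>loc scale p. \<forall>y\<in>F. \<forall>z\<in>G. x = loc_add scale p y z \<longrightarrow>
      y = loc_lincomb scale p (\<lambda>i. \<phi> i x) b n"
    using assms unfolding free_E_summand_def by (elim exE conjE) (rule that)
  have bloc: "b j \<in> loc scale p" if "j < n" for j
    using F bF that unfolding loc_submodule_def by blast
  have zG: "loc_zero scale p \<in> G" using G unfolding loc_submodule_def by blast
  have \<phi>loc: "\<phi> i x \<in> loc (*) p" if "i < n" "x \<in> loc scale p" for i x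
    using \<phi>E that unfolding loc_dual_def by (auto elim!: locE simp: mult_notin ring.frac_in_loc)
  \<comment> \<open>\<open>b j\<close> projects to itself, so its coordinates form the \<open>j\<close>-th unit vector\<close>
  have "\<phi> i (b j) = (if i = j then loc_one p else loc_zero (*) p)" if ij: "i < n" "j < n" for i j
  proof -
    have "loc_lincomb scale p (\<lambda>i. \<phi> i (b j)) b n = b j"
      using proj[rule_format, OF bloc[OF ij(2)] bF[rule_format, OF ij(2)] zG
          loc_add_zero_right[OF bloc[OF ij(2)], symmetric]] by simp
    also have "\<dots> = loc_lincomb scale p (\<lambda>i. if i = j then loc_one p else loc_zero (*) p) b n"
      using loc_lincomb_unit_vector[OF bloc ij(2)] by simp
    finally have eq: "loc_lincomb scale p (\<lambda>i. \<phi> i (b j)) b n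
      = loc_lincomb scale p (\<lambda>i. if i = j then loc_one p else loc_zero (*) p) b n" .
    have "\<phi> i (b j) \<in> loc (*) p \<and> (if i = j then loc_one p else loc_zero (*) p) \<in> loc (*) p"
      if "i < n" for i
      using \<phi>loc[OF that bloc[OF ij(2)]] one_notin ring.frac_in_loc ring.loc_zero_in_loc by auto
    from uniq[rule_format, OF this eq ij(1)] show ?thesis .
  qed
  then show ?thesis using that bF \<phi>E by blast
qed

lemma free_E_summand_scaled_diagonal_pairing:
  assumes "free_E_summand scale p E n F" and "F \<subseteq> loc_span scale p S"
  obtains f v W c where "\<And>i. i < n \<Longrightarrow> f i \<in> E" "\<And>j. j < n \<Longrightarrow> v j \<in> span S"
    "W \<notin> p" "\<And>i. i < n \<Longrightarrow> c i \<notin> p"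
    "\<And>i j. i < n \<Longrightarrow> j < n \<Longrightarrow> W * f i (v j) = (if i = j then W * c i else 0)"
proof -
  obtain b \<phi> where bF: "\<And>j. j < n \<Longrightarrow> b j \<in> F" and \<phi>E: "\<And>i. i < n \<Longrightarrow> \<phi> i \<in> loc_dual scale p E"
    and unit: "\<And>i j. i < n \<Longrightarrow> j < n \<Longrightarrow> \<phi> i (b j) = (if i = j then loc_one p else loc_zero (*) p)"
    by (rule free_E_summand_dual_basis[OF assms(1)]) blast
  have "\<exists>m u. b j = frac scale p m u \<and> m \<in> span S \<and> u \<notin> p" if "j < n" for j
    using assms(2) bF that unfolding loc_span_def by blast
  then obtain v u where b: "\<And>j. j < n \<Longrightarrow> b j = frac scale p (v j) (u j) \<and> v j \<in> span S \<and> u j \<notin> p"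
    by metis
  have "\<exists>f \<sigma>. f \<in> E \<and> \<sigma> \<notin> p \<and> (\<forall>m u. u \<notin> p \<longrightarrow> \<phi> i (frac scale p m u) = frac (*) p (f m) (\<sigma> * u))"
    if "i < n" for i
    using \<phi>E[OF that] unfolding loc_dual_def by blast
  then obtain f \<sigma> where f: "\<And>i. i < n \<Longrightarrow> f i \<in> E \<and> \<sigma> i \<notin> p \<and>
      (\<forall>m u. u \<notin> p \<longrightarrow> \<phi> i (frac scale p m u) = frac (*) p (f i m) (\<sigma> i * u))"
    by metis
  have ex: "\<exists>w. w \<notin> p \<and> w * f i (v j) = w * (if i = j then \<sigma> i * u j else 0)"
    if "i < n" "j < n" for i j
  proof -
    have s: "\<sigma> i * u j \<notin> p" using f b that mult_notin by blast
    have "frac (*) p (f i (v j)) (\<sigma> i * u j) = frac (*) p (if i = j then 1 else 0) 1"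
      using unit[OF that] b[OF that(2)] f[OF that(1)] by (cases "i = j") (simp_all add: loc_zero_def)
    then obtain w where "w \<notin> p" "w * (1 * f i (v j) - \<sigma> i * u j * (if i = j then 1 else 0)) = 0"
      using ring.frac_eq_iff[OF s one_notin] by blast
    then show ?thesis by (intro exI[of _ w]) (cases "i = j"; simp add: right_diff_distrib)
  qed
  obtain W where W: "W \<notin> p"
    "\<And>ij. ij \<in> {..<n} \<times> {..<n} \<Longrightarrow> W * (case ij of (i, j) \<Rightarrow> f i (v j))
      = W * (case ij of (i, j) \<Rightarrow> if i = j then \<sigma> i * u j else 0)"
    by (rule prime_ideal_common_multiplier[OF prime_p, of "{..<n} \<times> {..<n}"
          "\<lambda>(i, j). f i (v j)" "\<lambda>(i, j). if i = j then \<sigma> i * u j else 0"]) (use ex in auto)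
  show ?thesis
  proof (rule that[of f v W "\<lambda>i. \<sigma> i * u i"])
    show "W * f i (v j) = (if i = j then W * (\<sigma> i * u i) else 0)" if "i < n" "j < n" for i j
      using W(2)[of "(i, j)"] that by auto
  qed (use f b W(1) mult_notin in auto)
qed

lemma free_E_summand_det_notin:
  assumes "free_E_summand scale p E n F" "F \<subseteq> loc_span scale p S" "k \<le> n"
  shows "\<exists>f v. (\<forall>i<k. f i \<in> E) \<and> (\<forall>j<k. v j \<in> span S) \<and> det (pairing_mat k f v) \<notin> p"
proof -
  obtain f v W c where f: "\<And>i. i < n \<Longrightarrow> f i \<in> E" and v: "\<And>j. j < n \<Longrightarrow> v j \<in> span S"
    and W: "W \<notin> p" and c: "\<And>i. i < n \<Longrightarrow> c i \<notin> p"
    and diag: "\<And>i j. i < n \<Longrightarrow> j < n \<Longrightarrow> W * f i (v j) = (if i = j then W * c i else 0)"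
    by (rule free_E_summand_scaled_diagonal_pairing[OF assms(1,2)]) blast
  have "det (pairing_mat k f v) \<notin> p"
    using assms(3) by (intro det_notin_prime_ideal_if_scaled_diagonal[OF prime_p _ W, of _ k c])
      (auto simp: pairing_mat_def c diag)
  then show ?thesis using f v assms(3) by (intro exI[of _ f] exI[of _ v]) auto
qed

section \<open>A minor outside the prime yields a free summand\<close>

definition loc_functional :: "('m \<Rightarrow> 'a) \<Rightarrow> 'a \<Rightarrow> ('m \<times> 'a) set \<Rightarrow> ('a \<times> 'a) set" where
  "loc_functional g d x = (case loc_rep scale p x of (m, u) \<Rightarrow> frac (*) p (g m) (d * u))"

context
  fixes g :: "'m \<Rightarrow> 'a" and d :: 'a
  assumes g: "module_hom scale (*) g" and d: "d \<notin> p"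
begin

interpretation g: module_hom scale "(*)" g by (rule g)

lemma loc_functional_frac:
  assumes u: "u \<notin> p"
  shows "loc_functional g d (frac scale p m u) = frac (*) p (g m) (d * u)"
proof -
  obtain m0 u0 where rep: "loc_rep scale p (frac scale p m u) = (m0, u0)" by fastforce
  note rep' = loc_rep_frac[OF u rep]
  obtain w where w: "w \<notin> p" "w *s (u *s m0 - u0 *s m) = 0"
    using frac_eq_iff rep' u by metis
  have "w * ((d * u) * g m0 - (d * u0) * g m) = d * g (w *s (u *s m0 - u0 *s m))"
    by (simp add: g.diff g.scale algebra_simps)
  then have "w * ((d * u) * g m0 - (d * u0) * g m) = 0" by (simp add: w(2))
  then have "frac (*) p (g m0) (d * u0) = frac (*) p (g m) (d * u)"
    using ring.frac_eq_iff[of "d * u0" "d * u"] w(1) rep'(1) u d mult_notin by blast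
  then show ?thesis unfolding loc_functional_def rep by simp
qed

lemma loc_functional_in_loc_dual: "g \<in> E \<Longrightarrow> loc_functional g d \<in> loc_dual scale p E"
  unfolding loc_dual_def using d loc_functional_frac by blast

lemma loc_functional_zero: "loc_functional g d (loc_zero scale p) = loc_zero (*) p"
  unfolding loc_zero_def[of scale] using d one_notin mult_notin
  by (simp add: loc_functional_frac ring.frac_zero)

lemma loc_functional_add:
  assumes "x \<in> loc scale p" "y \<in> loc scale p"
  shows "loc_functional g d (loc_add scale p x y)
    = loc_add (*) p (loc_functional g d x) (loc_functional g d y)"
proof -
  obtain m s m' s' where s: "s \<notin> p" "s' \<notin> p" and xy: "x = frac scale p m s" "y = frac scale p m' s'"
    using assms by (metis locE)
  have ds: "d * s \<notin> p" "d * s' \<notin> p" "d * (s * s') \<notin> p" "d * s * (d * s') \<notin> p"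
    using s d mult_notin by auto
  have "loc_functional g d (loc_add scale p x y) = frac (*) p (s' * g m + s * g m') (d * (s * s'))"
    using s ds by (simp add: xy loc_add_frac mult_notin loc_functional_frac g.add g.scale)
  also have "\<dots> = frac (*) p ((d * s') * g m + (d * s) * g m') (d * s * (d * s'))"
    using ds by (intro ring.frac_eqI) (simp_all add: algebra_simps)
  also have "\<dots> = loc_add (*) p (loc_functional g d x) (loc_functional g d y)"
    using s ds by (simp add: xy loc_functional_frac ring.loc_add_frac)
  finally show ?thesis .
qed

lemma loc_functional_smul:
  assumes "a \<in> loc (*) p" "x \<in> loc scale p"
  shows "loc_functional g d (loc_smul scale p a x) = loc_smul (*) p a (loc_functional g d x)"
proof -
  obtain c w m u where wu: "w \<notin> p" "u \<notin> p" and ax: "a = frac (*) p c w" "x = frac scale p m u"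
    using assms by (metis locE ring.locE)
  have "loc_functional g d (loc_smul scale p a x) = frac (*) p (c * g m) (d * (w * u))"
    using wu by (simp add: ax loc_smul_frac mult_notin loc_functional_frac g.scale)
  also have "\<dots> = loc_smul (*) p a (loc_functional g d x)"
    using wu d by (simp add: ax loc_functional_frac ring.loc_smul_frac mult_notin mult_ac)
  finally show ?thesis .
qed

end

end


locale nondegenerate_pairing = prime_localization scale p
  for scale :: "'a::comm_ring_1 \<Rightarrow> 'm::ab_group_add \<Rightarrow> 'm" (infixr \<open>*s\<close> 75) and p +
  fixes E :: "('m \<Rightarrow> 'a) set" and n :: nat and f :: "nat \<Rightarrow> 'm \<Rightarrow> 'a" and v :: "nat \<Rightarrow> 'm"
  assumes dual_E: "dual_submodule scale E"
    and f_in_E: "\<And>i. i < n \<Longrightarrow> f i \<in> E"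
    and det_notin: "det (pairing_mat n f v) \<notin> p"
begin

abbreviation pdet :: 'a where "pdet \<equiv> det (pairing_mat n f v)"

text \<open>Cramer's rule: the rows of the adjugate give functionals in \<open>E\<close> dual to the \<open>v j\<close>, up to
  the factor \<open>pdet\<close>, which is a unit in \<open>R\<^sub>p\<close>.\<close>
definition dual_basis :: "nat \<Rightarrow> 'm \<Rightarrow> 'a" where
  "dual_basis i x = (\<Sum>k<n. adj_mat (pairing_mat n f v) $$ (i, k) * f k x)"

abbreviation coord :: "nat \<Rightarrow> ('m \<times> 'a) set \<Rightarrow> ('a \<times> 'a) set" where
  "coord i \<equiv> loc_functional (dual_basis i) pdet"

definition basis :: "nat \<Rightarrow> ('m \<times> 'a) set" where
  "basis j = frac scale p (v j) 1"

definition free_part :: "('m \<times> 'a) set set" where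
  "free_part = {frac scale p (\<Sum>j<n. r j *s v j) u | r u. u \<notin> p}"

definition complement :: "('m \<times> 'a) set set" where
  "complement = {x \<in> loc scale p. \<forall>i<n. coord i x = loc_zero (*) p}"

lemma dual_basis_in_E: "dual_basis i \<in> E"
  unfolding dual_basis_def by (rule dual_submodule_sum[OF dual_E f_in_E])

lemma dual_basis_hom: "module_hom scale (*) (dual_basis i)"
  by (rule dual_submodule_hom[OF dual_E dual_basis_in_E])

lemma dual_basis_apply:
  assumes ij: "i < n" "j < n"
  shows "dual_basis i (v j) = (if i = j then pdet else 0)"
proof -
  have A: "pairing_mat n f v \<in> carrier_mat n n" by (simp add: pairing_mat_def)
  have "dual_basis i (v j) = (adj_mat (pairing_mat n f v) * pairing_mat n f v) $$ (i, j)"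
    using ij adj_mat(1)[OF A] by (simp add: dual_basis_def scalar_prod_def pairing_mat_def
        atLeast0LessThan)
  also have "\<dots> = (if i = j then pdet else 0)"
    using ij by (simp add: adj_mat(3)[OF A])
  finally show ?thesis .
qed

lemma dual_basis_lincomb: "i < n \<Longrightarrow> dual_basis i (\<Sum>j<n. r j *s v j) = r i * pdet"
  by (simp add: module_hom.sum[OF dual_basis_hom] module_hom.scale[OF dual_basis_hom]
      dual_basis_apply if_distrib cong: if_cong)

lemma coord_frac: "u \<notin> p \<Longrightarrow> coord i (frac scale p m u) = frac (*) p (dual_basis i m) (pdet * u)"
  by (rule loc_functional_frac[OF dual_basis_hom det_notin])

lemma coord_lincomb:
  assumes "u \<notin> p" "i < n"
  shows "coord i (frac scale p (\<Sum>j<n. r j *s v j) u) = frac (*) p (r i) u"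
proof -
  have "coord i (frac scale p (\<Sum>j<n. r j *s v j) u) = frac (*) p (r i * pdet) (pdet * u)"
    using assms by (simp add: coord_frac dual_basis_lincomb)
  also have "\<dots> = frac (*) p (r i) u"
    using assms det_notin mult_notin by (intro ring.frac_eqI) (simp_all add: mult_ac)
  finally show ?thesis .
qed

lemma coord_zero: "coord i (loc_zero scale p) = loc_zero (*) p"
  by (rule loc_functional_zero[OF dual_basis_hom det_notin])

lemma free_partI: "u \<notin> p \<Longrightarrow> frac scale p (\<Sum>j<n. r j *s v j) u \<in> free_part"
  unfolding free_part_def by blast

lemma free_partE:
  assumes "y \<in> free_part"
  obtains r u where "u \<notin> p" "y = frac scale p (\<Sum>j<n. r j *s v j) u"
  using assms unfolding free_part_def by blast

lemma free_part_subset_loc: "free_part \<subseteq> loc scale p"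
  by (auto elim: free_partE intro: frac_in_loc)

lemma loc_lincomb_basis:
  "u \<notin> p \<Longrightarrow> loc_lincomb scale p (\<lambda>j. frac (*) p (r j) u) basis n = frac scale p (\<Sum>j<n. r j *s v j) u"
  unfolding basis_def by (rule loc_lincomb_common_denominator)

lemma free_part_submodule: "loc_submodule scale p free_part"
  unfolding loc_submodule_def
proof (intro conjI ballI)
  show "free_part \<subseteq> loc scale p" by (rule free_part_subset_loc)
  show "loc_zero scale p \<in> free_part"
    using free_partI[OF one_notin, of "\<lambda>_. 0"] by (simp add: loc_zero_def)
next
  fix x y assume "x \<in> free_part" "y \<in> free_part"
  then obtain r u r' u' where u: "u \<notin> p" "u' \<notin> p"
    and xy: "x = frac scale p (\<Sum>j<n. r j *s v j) u" "y = frac scale p (\<Sum>j<n. r' j *s v j) u'"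
    by (elim free_partE)
  have "loc_add scale p x y = frac scale p (\<Sum>j<n. (u' * r j + u * r' j) *s v j) (u * u')"
    using u by (simp add: xy loc_add_frac scale_sum_right scale_left_distrib sum.distrib)
  then show "loc_add scale p x y \<in> free_part" using u mult_notin by (simp add: free_partI)
next
  fix a x assume "a \<in> loc (*) p" "x \<in> free_part"
  then obtain c w r u where wu: "w \<notin> p" "u \<notin> p"
    and ax: "a = frac (*) p c w" "x = frac scale p (\<Sum>j<n. r j *s v j) u"
    by (elim free_partE ring.locE)
  have "loc_smul scale p a x = frac scale p (\<Sum>j<n. (c * r j) *s v j) (w * u)"
    using wu by (simp add: ax loc_smul_frac scale_sum_right)
  then show "loc_smul scale p a x \<in> free_part" using wu mult_notin by (simp add: free_partI)
qed

lemma coord_add: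
  "x \<in> loc scale p \<Longrightarrow> y \<in> loc scale p \<Longrightarrow>
    coord i (loc_add scale p x y) = loc_add (*) p (coord i x) (coord i y)"
  by (rule loc_functional_add[OF dual_basis_hom det_notin])

lemma coord_smul:
  "a \<in> loc (*) p \<Longrightarrow> x \<in> loc scale p \<Longrightarrow>
    coord i (loc_smul scale p a x) = loc_smul (*) p a (coord i x)"
  by (rule loc_functional_smul[OF dual_basis_hom det_notin])

lemma complement_submodule: "loc_submodule scale p complement"
  unfolding loc_submodule_def
proof (intro conjI ballI)
  show "complement \<subseteq> loc scale p" unfolding complement_def by blast
  show "loc_zero scale p \<in> complement"
    unfolding complement_def by (simp add: loc_zero_in_loc coord_zero)
next
  fix x y assume "x \<in> complement" "y \<in> complement"
  then show "loc_add scale p x y \<in> complement"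
    unfolding complement_def
    by (simp add: loc_add_in_loc coord_add ring.loc_add_zero_right ring.loc_zero_in_loc)
next
  fix a x assume "a \<in> loc (*) p" "x \<in> complement"
  then show "loc_smul scale p a x \<in> complement"
    unfolding complement_def by (simp add: loc_smul_in_loc coord_smul ring.loc_smul_zero_right)
qed

lemma free_part_inter_complement: "free_part \<inter> complement = {loc_zero scale p}"
proof (intro equalityI subsetI)
  fix y assume y: "y \<in> free_part \<inter> complement"
  then obtain r u where u: "u \<notin> p" and ye: "y = frac scale p (\<Sum>j<n. r j *s v j) u"
    by (blast elim: free_partE)
  have ex: "\<exists>w. w \<notin> p \<and> w * r i = w * 0" if i: "i \<in> {..<n}" for i
  proof -
    have "frac (*) p (r i) u = frac (*) p 0 1"
      using y i coord_lincomb[OF u] unfolding complement_def ye by (simp add: loc_zero_def)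
    then show ?thesis using ring.frac_eq_iff[OF u one_notin] by auto
  qed
  obtain W where W: "W \<notin> p" "\<And>i. i \<in> {..<n} \<Longrightarrow> W * r i = W * 0"
    by (rule prime_ideal_common_multiplier[OF prime_p, of "{..<n}" r "\<lambda>_. 0"]) (use ex in auto)
  have "W *s (1 *s (\<Sum>j<n. r j *s v j) - u *s 0) = (\<Sum>j<n. (W * r j) *s v j)"
    by (simp add: scale_sum_right)
  also have "\<dots> = 0" using W(2) by simp
  finally have "y = frac scale p 0 1"
    unfolding ye using frac_eq_iff[OF u one_notin] W(1) by blast
  then show "y \<in> {loc_zero scale p}" by (simp add: loc_zero_def)
next
  fix y assume "y \<in> {loc_zero scale p}"
  then show "y \<in> free_part \<inter> complement"
    using free_part_submodule complement_submodule unfolding loc_submodule_def by blast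
qed

lemma free_part_plus_complement:
  assumes "x \<in> loc scale p" shows "\<exists>y\<in>free_part. \<exists>z\<in>complement. x = loc_add scale p y z"
proof -
  obtain m u where u: "u \<notin> p" and x: "x = frac scale p m u" using assms by (rule locE)
  define Y where "Y = (\<Sum>j<n. dual_basis j m *s v j)"
  have du: "pdet * u \<notin> p" using det_notin u mult_notin by blast
  have "frac scale p Y (pdet * u) \<in> free_part" unfolding Y_def by (rule free_partI[OF du])
  moreover have "frac scale p (pdet *s m - Y) (pdet * u) \<in> complement"
  proof -
    have "dual_basis i (pdet *s m - Y) = 0" if "i < n" for i
      using that by (simp add: Y_def module_hom.diff[OF dual_basis_hom]
          module_hom.scale[OF dual_basis_hom] dual_basis_lincomb mult.commute)
    then show ?thesis
      using du det_notin mult_notin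
      by (simp add: complement_def coord_frac frac_in_loc ring.frac_zero)
  qed
  moreover have "x = loc_add scale p (frac scale p Y (pdet * u)) (frac scale p (pdet *s m - Y) (pdet * u))"
  proof -
    have "loc_add scale p (frac scale p Y (pdet * u)) (frac scale p (pdet *s m - Y) (pdet * u))
        = frac scale p ((pdet * u) *s (pdet *s m)) ((pdet * u) * (pdet * u))"
      by (simp add: loc_add_frac du flip: scale_right_distrib)
    also have "\<dots> = x"
      unfolding x by (rule frac_eqI[OF mult_notin[OF du du] u]) (simp add: mult_ac)
    finally show ?thesis by simp
  qed
  ultimately show ?thesis by blast
qed

lemma basis_in_free_part:
  assumes "i < n" shows "basis i \<in> free_part"
proof -
  have "(\<Sum>j<n. (if j = i then 1 else 0) *s v j) = (\<Sum>j<n. if j = i then v j else 0)"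
    by (rule sum.cong) auto
  also have "\<dots> = v i" using assms by simp
  finally show ?thesis
    using free_partI[OF one_notin, of "\<lambda>j. if j = i then 1 else 0"] by (simp add: basis_def)
qed

lemma free_part_coordinates:
  assumes "y \<in> free_part"
  shows "\<exists>a. (\<forall>i<n. a i \<in> loc (*) p) \<and> y = loc_lincomb scale p a basis n"
proof -
  obtain r u where u: "u \<notin> p" and y: "y = frac scale p (\<Sum>j<n. r j *s v j) u"
    using assms by (rule free_partE)
  show ?thesis
    by (intro exI[of _ "\<lambda>j. frac (*) p (r j) u"]) (simp add: y u loc_lincomb_basis ring.frac_in_loc)
qed

lemma coord_loc_lincomb_basis:
  assumes "\<And>j. j < n \<Longrightarrow> a j \<in> loc (*) p" "i < n"
  shows "coord i (loc_lincomb scale p a basis n) = a i"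
proof -
  obtain u r where u: "u \<notin> p" and a: "\<And>j. j < n \<Longrightarrow> a j = frac (*) p (r j) u"
    using loc_common_denominator[of n a, OF assms(1)] by blast
  have "loc_lincomb scale p a basis n = frac scale p (\<Sum>j<n. r j *s v j) u"
    using loc_lincomb_cong[of n a "\<lambda>j. frac (*) p (r j) u"] a loc_lincomb_basis[OF u] by simp
  then show ?thesis using coord_lincomb[OF u assms(2)] a[OF assms(2)] by simp
qed

lemma projection_coord:
  assumes "y \<in> free_part" "z \<in> complement"
  shows "y = loc_lincomb scale p (\<lambda>i. coord i (loc_add scale p y z)) basis n"
proof -
  obtain r u where u: "u \<notin> p" and y: "y = frac scale p (\<Sum>j<n. r j *s v j) u"
    using assms(1) by (rule free_partE)
  have z: "z \<in> loc scale p" "\<And>i. i < n \<Longrightarrow> coord i z = loc_zero (*) p"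
    using assms(2) unfolding complement_def by auto
  have "coord i (loc_add scale p y z) = frac (*) p (r i) u" if "i < n" for i
  proof -
    have "coord i (loc_add scale p y z) = loc_add (*) p (frac (*) p (r i) u) (loc_zero (*) p)"
      using u that by (simp add: y coord_add frac_in_loc z coord_lincomb)
    also have "\<dots> = frac (*) p (r i) u"
      by (rule ring.loc_add_zero_right[OF ring.frac_in_loc[OF u]])
    finally show ?thesis .
  qed
  then have "loc_lincomb scale p (\<lambda>i. coord i (loc_add scale p y z)) basis n
      = loc_lincomb scale p (\<lambda>j. frac (*) p (r j) u) basis n"
    by (rule loc_lincomb_cong)
  then show ?thesis by (simp add: loc_lincomb_basis[OF u] y)
qed

lemma free_E_summand_free_part: "free_E_summand scale p E n free_part"
  unfolding free_E_summand_def
proof (intro exI[of _ complement] exI[of _ basis] exI[of _ "\<lambda>i. coord i"] conjI allI impI ballI)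
  show "loc_submodule scale p free_part" by (rule free_part_submodule)
  show "loc_submodule scale p complement" by (rule complement_submodule)
  show "free_part \<inter> complement = {loc_zero scale p}" by (rule free_part_inter_complement)
  show "\<exists>y\<in>free_part. \<exists>z\<in>complement. x = loc_add scale p y z" if "x \<in> loc scale p" for x
    using that by (rule free_part_plus_complement)
  show "basis i \<in> free_part" if "i < n" for i using that by (rule basis_in_free_part)
  show "\<exists>a. (\<forall>i<n. a i \<in> loc (*) p) \<and> y = loc_lincomb scale p a basis n" if "y \<in> free_part" for y
    using that by (rule free_part_coordinates)
  show "a i = a' i"
    if "\<forall>i<n. a i \<in> loc (*) p \<and> a' i \<in> loc (*) p"
      and "loc_lincomb scale p a basis n = loc_lincomb scale p a' basis n" and "i < n" for a a' i
    using that coord_loc_lincomb_basis[of a i] coord_loc_lincomb_basis[of a' i] by auto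
  show "coord i \<in> loc_dual scale p E" if "i < n" for i
    by (rule loc_functional_in_loc_dual[OF dual_basis_hom det_notin dual_basis_in_E])
  show "y = loc_lincomb scale p (\<lambda>i. coord i x) basis n"
    if "x \<in> loc scale p" "y \<in> free_part" "z \<in> complement" "x = loc_add scale p y z" for x y z
    using that(2,3) unfolding that(4) by (rule projection_coord)
qed

lemma free_part_subset_loc_span:
  "(\<And>j. j < n \<Longrightarrow> v j \<in> span S) \<Longrightarrow> free_part \<subseteq> loc_span scale p S"
  unfolding loc_span_def by (auto elim!: free_partE intro!: span_sum span_scale)

end


section \<open>The rank function\<close>

context prime_localization
begin

lemma free_E_summand_of_det_notin:
  assumes "dual_submodule scale E" "\<And>i. i < n \<Longrightarrow> f i \<in> E" "\<And>j. j < n \<Longrightarrow> v j \<in> span S"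
    and "det (pairing_mat n f v) \<notin> p"
  shows "\<exists>F. free_E_summand scale p E n F \<and> F \<subseteq> loc_span scale p S"
proof -
  interpret nondegenerate_pairing scale p E n f v
    using assms(1,2,4) by unfold_locales
  show ?thesis using free_E_summand_free_part free_part_subset_loc_span assms(3) by blast
qed

lemma free_E_summand_rank_le:
  assumes G: "finite G" "span G = UNIV" and E: "dual_submodule scale E"
    and F: "free_E_summand scale p E n F" "F \<subseteq> loc_span scale p S"
  shows "n \<le> card G"
proof (rule ccontr)
  assume "\<not> n \<le> card G"
  moreover obtain f v where "\<forall>i<n. f i \<in> E" "det (pairing_mat n f v) \<notin> p"
    using free_E_summand_det_notin[OF F order.refl] by blast
  ultimately show False
    using det_pairing_mat_eq_0[OF module_axioms G, of n f v] dual_submodule_hom[OF E]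
      prime_ideal_zero[OF prime_p] by auto
qed

lemma delta_le_iff:
  assumes fg: "finitely_generated scale" and E: "dual_submodule scale E"
  shows "delta scale E p S \<le> t \<longleftrightarrow>
    \<not> (\<exists>f v. (\<forall>i<Suc t. f i \<in> E) \<and> (\<forall>j<Suc t. v j \<in> span S) \<and> det (pairing_mat (Suc t) f v) \<notin> p)"
proof -
  define P where "P n \<longleftrightarrow> (\<exists>F. free_E_summand scale p E n F \<and> F \<subseteq> loc_span scale p S)" for n
  obtain G where G: "finite G" "span G = UNIV" using fg unfolding finitely_generated_def by blast
  have bound: "P n \<Longrightarrow> n \<le> card G" for n
    unfolding P_def using free_E_summand_rank_le[OF G E] by blast
  have "P 0"
    unfolding P_def using free_E_summand_of_det_notin[OF E, of 0] one_notin
    by (simp add: pairing_mat_def)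
  have delta_eq: "delta scale E p S = (GREATEST n. P n)" unfolding delta_def P_def ..
  have P_delta: "P (delta scale E p S)"
    unfolding delta_eq by (rule GreatestI_nat[where P = P, OF \<open>P 0\<close> bound])
  have le_delta: "n \<le> delta scale E p S" if "P n" for n
    unfolding delta_eq by (rule Greatest_le_nat[where P = P, OF that bound])
  show ?thesis
  proof
    assume le: "delta scale E p S \<le> t"
    show "\<not> (\<exists>f v. (\<forall>i<Suc t. f i \<in> E) \<and> (\<forall>j<Suc t. v j \<in> span S) \<and> det (pairing_mat (Suc t) f v) \<notin> p)"
    proof
      assume "\<exists>f v. (\<forall>i<Suc t. f i \<in> E) \<and> (\<forall>j<Suc t. v j \<in> span S) \<and> det (pairing_mat (Suc t) f v) \<notin> p"
      then obtain f v where "\<forall>i<Suc t. f i \<in> E" "\<forall>j<Suc t. v j \<in> span S"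
        "det (pairing_mat (Suc t) f v) \<notin> p" by blast
      then have "P (Suc t)" unfolding P_def by (intro free_E_summand_of_det_notin[OF E]) auto
      then show False using le_delta le by fastforce
    qed
  next
    assume no_minor: "\<not> (\<exists>f v. (\<forall>i<Suc t. f i \<in> E) \<and> (\<forall>j<Suc t. v j \<in> span S) \<and> det (pairing_mat (Suc t) f v) \<notin> p)"
    show "delta scale E p S \<le> t"
    proof (rule ccontr)
      assume "\<not> delta scale E p S \<le> t"
      moreover obtain F where "free_E_summand scale p E (delta scale E p S) F" "F \<subseteq> loc_span scale p S"
        using P_delta unfolding P_def by blast
      ultimately show False using free_E_summand_det_notin[of E _ F S "Suc t"] no_minor by simp
    qed
  qed
qed

end

theorem lemma4p1:
  fixes scale :: "'a::comm_ring_1 \<Rightarrow> 'm::ab_group_add \<Rightarrow> 'm"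
    and X :: "'a set set" and E :: "('m \<Rightarrow> 'a) set" and S :: "'m set" and t :: nat
  assumes "module scale"
    and "noetherian_ring TYPE('a)"
    and "finitely_generated scale"
    and "basic_set X"
    and "dual_submodule scale E"
  shows "zariski_closed_in X {p \<in> X. delta scale E p S \<le> t}"
proof -
  define J where "J = {det (pairing_mat (Suc t) f v) | f v.
    (\<forall>i<Suc t. f i \<in> E) \<and> (\<forall>j<Suc t. v j \<in> module.span scale S)}"
  have "delta scale E p S \<le> t \<longleftrightarrow> J \<subseteq> p" if "p \<in> X" for p
  proof -
    have "prime_ideal p" using assms(4) that unfolding basic_set_def Spec_def by blast
    then interpret prime_localization scale p
      by (intro prime_localization.intro[OF assms(1)] prime_localization_axioms.intro)
    show ?thesis unfolding delta_le_iff[OF assms(3,5)] J_def by blast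
  qed
  then show ?thesis unfolding zariski_closed_in_def by (intro exI[of _ J]) auto
qed

end
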